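(* Let $R$ be a commutative ring with nonzero identity, $\delta$ and $\gamma$ expansions of ideals of $R$, and $I$ a proper ideal of $R$. (1) If $\delta(I)$ is an $n$-ideal of $R$, then $I$ is a $\delta$-$n$-ideal of $R$. Conversely, if $\delta=\delta_1$ and $I$ is a $\delta_1$-$n$-ideal, then $\delta_1(I)=\sqrt{I}$ is an $n$-ideal of $R$. (2) If $\delta(J)\subseteq\gamma(J)$ for all ideals $J$ of $R$ and $I$ is a $\delta$-$n$-ideal of $R$, then $I$ is a $\gamma$-$n$-ideal of $R$. (3) If $\gamma(I)$ is a $\delta$-$n$-ideal of $R$, then $I$ is a $\delta\circ\gamma$-$n$-ideal of $R$.
   Context: An expansion of ideals of a ring $R$ is a map $\delta$ from the set of ideals of $R$ to itself such that $I\subseteq\delta(I)$ for every ideal $I$, and $\delta(I)\subseteq\delta(J)$ whenever $I\subseteq J$. $\sqrt{0}$ denotes the nilradical of $R$, and $\delta_1$ is the expansion $\delta_1(J)=\sqrt{J}$. Given an expansion $\delta$, a proper ideal $I$ of $R$ is a $\delta$-$n$-ideal if whenever $a,b\in R$ with $ab\in I$ and $a\notin\sqrt{0}$, then $b\in\delta(I)$. An $n$-ideal is a proper ideal $I$ such that $ab\in I$ and $a\notin\sqrt{0}$ imply $b\in I$. *)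

theory Defs
  imports "HOL-Algebra.Ideal"
begin

definition nilrad :: "('a, 'b) ring_scheme \<Rightarrow> 'a set" where
  "nilrad R = {a \<in> carrier R. \<exists>n::nat. a [^]\<^bsub>R\<^esub> n = \<zero>\<^bsub>R\<^esub>}"

definition rad :: "('a, 'b) ring_scheme \<Rightarrow> 'a set \<Rightarrow> 'a set" where
  "rad R J = {a \<in> carrier R. \<exists>n::nat. a [^]\<^bsub>R\<^esub> n \<in> J}"

definition expansion :: "('a, 'b) ring_scheme \<Rightarrow> ('a set \<Rightarrow> 'a set) \<Rightarrow> bool" where
  "expansion R \<delta> \<longleftrightarrow>
     (\<forall>I. ideal I R \<longrightarrow> ideal (\<delta> I) R \<and> I \<subseteq> \<delta> I) \<and>
     (\<forall>I J. ideal I R \<longrightarrow> ideal J R \<longrightarrow> I \<subseteq> J \<longrightarrow> \<delta> I \<subseteq> \<delta> J)"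

definition delta_n_ideal :: "('a, 'b) ring_scheme \<Rightarrow> ('a set \<Rightarrow> 'a set) \<Rightarrow> 'a set \<Rightarrow> bool" where
  "delta_n_ideal R \<delta> I \<longleftrightarrow> ideal I R \<and> I \<noteq> carrier R \<and>
     (\<forall>a \<in> carrier R. \<forall>b \<in> carrier R.
        a \<otimes>\<^bsub>R\<^esub> b \<in> I \<and> a \<notin> nilrad R \<longrightarrow> b \<in> \<delta> I)"

definition n_ideal :: "('a, 'b) ring_scheme \<Rightarrow> 'a set \<Rightarrow> bool" where
  "n_ideal R I \<longleftrightarrow> ideal I R \<and> I \<noteq> carrier R \<and>
     (\<forall>a \<in> carrier R. \<forall>b \<in> carrier R.
        a \<otimes>\<^bsub>R\<^esub> b \<in> I \<and> a \<notin> nilrad R \<longrightarrow> b \<in> I)"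

end

theory Submission
  imports Defs
begin

text \<open>Parts (1, first half), (2) and (3) are immediate from the definitions, using only
  \<open>I \<subseteq> \<gamma> I\<close> for (3). The content lies in the
  converse of (1): the radical of an ideal is an ideal, and if \<open>ab \<in> \<surd>I\<close> with \<open>a\<close> not
  nilpotent, then \<open>a\<^sup>n b\<^sup>n \<in> I\<close> for some \<open>n\<close> with \<open>a\<^sup>n\<close> still not nilpotent, so the
  \<open>\<delta>\<^sub>1\<close>-\<open>n\<close>-property of \<open>I\<close> gives \<open>b\<^sup>n \<in> \<surd>I\<close>, i.e. \<open>b \<in> \<surd>I\<close>.\<close>

lemma expansion_extensive: "expansion R \<delta> \<Longrightarrow> ideal I R \<Longrightarrow> I \<subseteq> \<delta> I"
  by (simp add: expansion_def)

lemma (in ring) pow_notin_nilrad: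
  fixes n :: nat
  assumes "a \<in> carrier R" "a \<notin> nilrad R"
  shows "a [^] n \<notin> nilrad R"
  using assms by (auto simp: nilrad_def nat_pow_pow)

lemma (in ring) pow_mem_radD:
  fixes n :: nat
  assumes "b \<in> carrier R" "b [^] n \<in> rad R I"
  shows "b \<in> rad R I"
  using assms by (auto simp: rad_def nat_pow_pow)

text \<open>Replaces the binomial theorem: induct on \<open>m + n\<close>, splitting
  \<open>(x \<oplus> y)\<^sup>k\<^sup>+\<^sup>1 = x(x \<oplus> y)\<^sup>k \<oplus> y(x \<oplus> y)\<^sup>k\<close> and absorbing \<open>x\<close> resp. \<open>y\<close> into the multiplier \<open>c\<close>.\<close>
lemma (in cring) mult_pow_add_mem_ideal:
  fixes m n :: nat
  assumes "ideal I R" and x: "x \<in> carrier R" and y: "y \<in> carrier R"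
    and c: "c \<in> carrier R" and "c \<otimes> x [^] m \<in> I" and "c \<otimes> y [^] n \<in> I"
  shows "c \<otimes> (x \<oplus> y) [^] (m + n) \<in> I"
  using c assms(5,6)
proof (induction "m + n" arbitrary: m n c)
  case 0
  then show ?case by simp
next
  case (Suc k)
  interpret ideal I R by fact
  show ?case
  proof (cases "m = 0 \<or> n = 0")
    case True
    then have "c \<in> I" using Suc.prems by auto
    then show ?thesis using x y by (simp add: I_r_closed)
  next
    case False
    then obtain m' n' where m: "m = Suc m'" and n: "n = Suc n'"
      by (metis not0_implies_Suc)
    have "c \<otimes> x \<otimes> (x \<oplus> y) [^] (m' + n) \<in> I"
    proof (rule Suc.hyps)
      show "c \<otimes> x \<otimes> x [^] m' \<in> I"
        using Suc.prems x m by (metis m_assoc nat_pow_Suc2 nat_pow_closed)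
      have "c \<otimes> x \<otimes> y [^] n = x \<otimes> (c \<otimes> y [^] n)"
        using x y Suc.prems(1) by (simp add: m_lcomm m_comm m_assoc)
      then show "c \<otimes> x \<otimes> y [^] n \<in> I" using Suc.prems(3) x I_l_closed by simp
    qed (use Suc.hyps Suc.prems x m in auto)
    moreover have "c \<otimes> y \<otimes> (x \<oplus> y) [^] (m + n') \<in> I"
    proof (rule Suc.hyps)
      show "c \<otimes> y \<otimes> y [^] n' \<in> I"
        using Suc.prems y n by (metis m_assoc nat_pow_Suc2 nat_pow_closed)
      have "c \<otimes> y \<otimes> x [^] m = y \<otimes> (c \<otimes> x [^] m)"
        using x y Suc.prems(1) by (simp add: m_lcomm m_comm m_assoc)
      then show "c \<otimes> y \<otimes> x [^] m \<in> I" using Suc.prems(2) y I_l_closed by simp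
    qed (use Suc.hyps Suc.prems y n in auto)
    moreover have "c \<otimes> (x \<oplus> y) [^] (m + n)
        = c \<otimes> x \<otimes> (x \<oplus> y) [^] k \<oplus> c \<otimes> y \<otimes> (x \<oplus> y) [^] k"
      using x y Suc.prems(1) Suc.hyps(2)[symmetric]
      by (simp add: nat_pow_Suc2 m_assoc m_comm r_distr l_distr)
    ultimately show ?thesis using Suc.hyps(2) m n by simp
  qed
qed

lemma (in cring) ideal_rad:
  assumes I: "ideal I R"
  shows "ideal (rad R I) R"
proof -
  interpret ideal I R by fact
  have "subgroup (rad R I) (add_monoid R)"
  proof (rule add.subgroupI)
    show "rad R I \<subseteq> carrier R" by (auto simp: rad_def)
    have "\<zero> \<in> rad R I" unfolding rad_def by (auto intro!: exI[of _ 1])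
    then show "rad R I \<noteq> {}" by blast
  next
    fix a assume "a \<in> rad R I"
    then obtain n :: nat where a: "a \<in> carrier R" "a [^] n \<in> I" by (auto simp: rad_def)
    have "(\<ominus> a) [^] n = (\<ominus> \<one>) [^] n \<otimes> a [^] n"
      using a by (simp add: nat_pow_distrib[symmetric] l_minus)
    then have "(\<ominus> a) [^] n \<in> I" using a I_l_closed by simp
    then show "\<ominus> a \<in> rad R I" using a by (auto simp: rad_def)
  next
    fix a b assume "a \<in> rad R I" "b \<in> rad R I"
    then obtain m n :: nat where a: "a \<in> carrier R" "a [^] m \<in> I" and b: "b \<in> carrier R" "b [^] n \<in> I"
      by (auto simp: rad_def)
    have "\<one> \<otimes> (a \<oplus> b) [^] (m + n) \<in> I"
      by (rule mult_pow_add_mem_ideal[OF I a(1) b(1)]) (use a b in auto)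
    then show "a \<oplus> b \<in> rad R I" using a b by (auto simp: rad_def)
  qed
  then show ?thesis
  proof (rule idealI[OF ring_axioms])
    fix a x assume "a \<in> rad R I" "x \<in> carrier R"
    then obtain n :: nat where a: "a \<in> carrier R" "a [^] n \<in> I" and x: "x \<in> carrier R"
      by (auto simp: rad_def)
    then have "(x \<otimes> a) [^] n \<in> I" using I_l_closed by (simp add: nat_pow_distrib)
    then show "x \<otimes> a \<in> rad R I" using a x by (auto simp: rad_def)
    then show "a \<otimes> x \<in> rad R I" using a x by (simp add: m_comm)
  qed
qed

lemma (in ring) rad_neq_carrier:
  assumes "ideal I R" "I \<noteq> carrier R"
  shows "rad R I \<noteq> carrier R"
proof
  assume "rad R I = carrier R"
  then have "\<one> \<in> rad R I" by simp
  then have "\<one> \<in> I" by (auto simp: rad_def)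
  then show False using assms ideal.one_imp_carrier by blast
qed

lemma n_ideal_imp_delta_n_ideal:
  assumes "expansion R \<delta>" "ideal I R" "I \<noteq> carrier R" "n_ideal R (\<delta> I)"
  shows "delta_n_ideal R \<delta> I"
  using assms expansion_extensive[OF assms(1,2)] unfolding n_ideal_def delta_n_ideal_def by blast

lemma (in cring) delta_n_ideal_rad_imp_n_ideal_rad:
  assumes H: "delta_n_ideal R (rad R) I"
  shows "n_ideal R (rad R I)"
  unfolding n_ideal_def
proof (intro conjI ballI impI)
  have "ideal I R" "I \<noteq> carrier R" using H by (auto simp: delta_n_ideal_def)
  then show "ideal (rad R I) R" "rad R I \<noteq> carrier R"
    by (simp_all add: ideal_rad rad_neq_carrier)
  fix a b assume a: "a \<in> carrier R" and b: "b \<in> carrier R"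
    and ab: "a \<otimes> b \<in> rad R I \<and> a \<notin> nilrad R"
  then obtain n :: nat where "a [^] n \<otimes> b [^] n \<in> I"
    by (auto simp: rad_def nat_pow_distrib)
  moreover have "a [^] n \<notin> nilrad R" using a ab by (simp add: pow_notin_nilrad)
  ultimately have "b [^] n \<in> rad R I" using H a b unfolding delta_n_ideal_def by auto
  then show "b \<in> rad R I" by (rule pow_mem_radD[OF b])
qed

lemma delta_n_ideal_mono:
  "\<delta> I \<subseteq> \<gamma> I \<Longrightarrow> delta_n_ideal R \<delta> I \<Longrightarrow> delta_n_ideal R \<gamma> I"
  unfolding delta_n_ideal_def by blast

lemma delta_n_ideal_comp:
  assumes "expansion R \<gamma>" "ideal I R" "I \<noteq> carrier R" "delta_n_ideal R \<delta> (\<gamma> I)"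
  shows "delta_n_ideal R (\<delta> \<circ> \<gamma>) I"
  using assms expansion_extensive[OF assms(1,2)] unfolding delta_n_ideal_def by auto

theorem proposition2p16:
  fixes R (structure) and \<delta> \<gamma> :: "'a set \<Rightarrow> 'a set" and I :: "'a set"
  assumes "cring R" and "\<one>\<^bsub>R\<^esub> \<noteq> \<zero>\<^bsub>R\<^esub>"
    and "expansion R \<delta>" and "expansion R \<gamma>"
    and "ideal I R" and "I \<noteq> carrier R"
  shows "(n_ideal R (\<delta> I) \<longrightarrow> delta_n_ideal R \<delta> I)
    \<and> (delta_n_ideal R (rad R) I \<longrightarrow> n_ideal R (rad R I))
    \<and> ((\<forall>J. ideal J R \<longrightarrow> \<delta> J \<subseteq> \<gamma> J) \<and> delta_n_ideal R \<delta> I \<longrightarrow> delta_n_ideal R \<gamma> I)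
    \<and> (delta_n_ideal R \<delta> (\<gamma> I) \<longrightarrow> delta_n_ideal R (\<delta> \<circ> \<gamma>) I)"
proof (intro conjI impI)
  show "delta_n_ideal R \<delta> I" if "n_ideal R (\<delta> I)"
    using n_ideal_imp_delta_n_ideal[OF assms(3,5,6) that] .
  show "n_ideal R (rad R I)" if "delta_n_ideal R (rad R) I"
    using cring.delta_n_ideal_rad_imp_n_ideal_rad[OF assms(1) that] .
  show "delta_n_ideal R \<gamma> I"
    if "(\<forall>J. ideal J R \<longrightarrow> \<delta> J \<subseteq> \<gamma> J) \<and> delta_n_ideal R \<delta> I"
    using that assms(5) delta_n_ideal_mono by blast
  show "delta_n_ideal R (\<delta> \<circ> \<gamma>) I" if "delta_n_ideal R \<delta> (\<gamma> I)"
    using delta_n_ideal_comp[OF assms(4,5,6) that] .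
qed

end
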